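(* Let $n,m\in\mathbb{N}$ be fixed. Then $\approx_{\mathrm{sa}}\subset\approx_{\mathrm{sc}}$ as relations on $\mathrm{IS}^{\mathrm{br}}_{n,m}$, i.e. $\approx_{\mathrm{sa}}$ is a proper subset of $\approx_{\mathrm{sc}}$.
   Context: Foci (register names) are $\mathrm{in}_i,\mathrm{aux}_i,\mathrm{out}_i$ for $i\ge1$; methods are $\mathrm{set}{:}0,\mathrm{set}{:}1,\mathrm{get}$. Basic instructions: $\mathrm{BI}_{n,m}=\{f.\mathrm{get}\mid f\in\{\mathrm{in}_1..\mathrm{in}_n\}\cup\{\mathrm{aux}_i\mid i\ge1\}\}\cup\{f.\mathrm{set}{:}b\mid f\in\{\mathrm{aux}_i\mid i\ge1\}\cup\{\mathrm{out}_1..\mathrm{out}_m\},b\in\{0,1\}\}$; $\mathrm{focus}(f.m)=f$. Primitive instructions: for $a\in\mathrm{BI}_{n,m}$ the plain instruction $a$, positive test $+a$, negative test $-a$; forward jumps $\#l$ ($l\in\mathbb{N}$); termination $!$. $\mathrm{IS}^{\mathrm{br}}_{n,m}$ is the set of finite nonempty sequences $u_1;\dots;u_k$ of primitive instructions. Threads: finite terms built from $\mathsf S$, $\mathsf D$ and $x\trianglelefteq a\trianglerighteq y$ for basic actions $a$ (the $f.m$ and trace actions $\langle f.m\rangle r$, $r\in\{0,1\}$), equal iff syntactically equal; $a\circ x$ abbreviates $x\trianglelefteq a\trianglerighteq x$. Thread extraction ($u$ primitive, $X$ nonempty sequence): $|a|=a\circ\mathsf D$, $|a;X|=a\circ|X|$,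 $|{+a}|=|{-a}|=a\circ\mathsf D$, $|{+a};X|=|X|\trianglelefteq a\trianglerighteq|\#2;X|$, $|{-a};X|=|\#2;X|\trianglelefteq a\trianglerighteq|X|$, $|\#l|=\mathsf D$, $|\#0;X|=\mathsf D$, $|\#1;X|=|X|$, $|\#(l+2);u|=\mathsf D$, $|\#(l+2);u;X|=|\#(l+1);X|$, $|!|=|!;X|=\mathsf S$. A register family $F$ is a finite set of pairs $f.\mathrm{BR}_b$ ($b\in\{0,1\}$) with distinct foci. Processing $m$ on $\mathrm{BR}_b$: $\mathrm{set}{:}c$ gives reply $c$ and new content $c$; $\mathrm{get}$ gives reply $b$, content unchanged. If $f.\mathrm{BR}_b\in F$ and $m$ gives reply $r$ and new content $b'$, $F'$ is $F$ with $f.\mathrm{BR}_b$ replaced by $f.\mathrm{BR}_{b'}$. Tracking use: $\mathrm{tuse}(\mathsf S,F)=\mathsf S$, $\mathrm{tuse}(\mathsf D,F)=\mathsf D$; if $f$ is not a focus in $F$, $\mathrm{tuse}(x\trianglelefteq f.m\trianglerighteq y,F)=\mathrm{tuse}(x,F)\trianglelefteq f.m\trianglerighteq\mathrm{tuse}(y,F)$; otherwise it equals $\langle f.m\rangle 1\circ\mathrm{tuse}(x,F')$ if $r=1$ and $\langle f.m\rangle 0\circ\mathrm{tuse}(y,F')$ if $r=0$; $\mathrm{tuse}(x\trianglelefteq\langle f.m\rangle r\trianglerighteq y,F)=\langle f.m\rangle r\circ\mathrm{tuse}(x,F)$. Equivalences on $\mathrm{IS}^{\mathrm{br}}_{n,m}$: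 $X\approx_{\mathrm b}Y$ iff $|X|=|Y|$. $X\approx_{\mathrm x}Y$ iff $Y=\chi_I(X)$ for a finite $I\subset\mathbb{N}_{>0}$, where $\chi_I$ acts instruction-wise: for $f=\mathrm{aux}_i$, $i\in I$: $f.m\mapsto f.\chi''(m)$, $+f.m\mapsto-f.\chi''(m)$, $-f.m\mapsto+f.\chi''(m)$ with $\chi''$ swapping $\mathrm{set}{:}0,\mathrm{set}{:}1$ and fixing $\mathrm{get}$; other instructions unchanged. $X\approx_{\mathrm r}Y$ iff $Y=\rho_r(X)$ for a bijection $r$ of $\mathbb{N}_{>0}$, $\rho_r$ replacing each focus $\mathrm{aux}_i$ by $\mathrm{aux}_{r(i)}$ instruction-wise. $X\approx_{\mathrm t}Y$ iff $|X|\approx'_{\mathrm t}|Y|$, where $\approx'_{\mathrm t}$ is the smallest relation on finite threads over $\mathrm{BI}_{n,m}$ such that: if $\mathrm{focus}(a)\ne\mathrm{focus}(b)$ then $(x\trianglelefteq b\trianglerighteq y)\trianglelefteq a\trianglerighteq(x'\trianglelefteq b\trianglerighteq y')\approx'_{\mathrm t}(x\trianglelefteq a\trianglerighteq x')\trianglelefteq b\trianglerighteq(y\trianglelefteq a\trianglerighteq y')$; it is reflexive and transitive; and it is a congruence for $\cdot\trianglelefteq a\trianglerighteq\cdot$. Computational trace equivalence: $X\approx_{\mathrm{ct}}Y$ iff for all $b_1,\dots,b_n\in\{0,1\}$, $\mathrm{tuse}(|X|,\{\mathrm{in}_i.\mathrm{BR}_{b_i}\mid 1\le i\le n\})=\mathrm{tuse}(|Y|,\{\mathrm{in}_i.\mathrm{BR}_{b_i}\mid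 1\le i\le n\})$. The structural algorithmic equivalence $\approx_{\mathrm{sa}}$ is the smallest transitive relation containing $\approx_{\mathrm b},\approx_{\mathrm x},\approx_{\mathrm r},\approx_{\mathrm t}$; the structural computational equivalence $\approx_{\mathrm{sc}}$ is the smallest transitive relation containing $\approx_{\mathrm{ct}},\approx_{\mathrm x},\approx_{\mathrm r},\approx_{\mathrm t}$. *)

theory Defs
  imports Main
begin

(* foci in_i, aux_i, out_i; only indices i >= 1 are meaningful *)
datatype focus = In nat | Aux nat | Out nat

datatype meth = Set0 | Set1 | Get

type_synonym basic = "focus \<times> meth"

definition focus_of :: "basic \<Rightarrow> focus" where
  "focus_of a = fst a"

definition BI :: "nat \<Rightarrow> nat \<Rightarrow> basic set" where
  "BI n m =
     {(f, Get) | f. (\<exists>i. 1 \<le> i \<and> i \<le> n \<and> f = In i) \<or> (\<exists>i. 1 \<le> i \<and> f = Aux i)}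
   \<union> {(f, c) | f c. ((\<exists>i. 1 \<le> i \<and> f = Aux i) \<or> (\<exists>i. 1 \<le> i \<and> i \<le> m \<and> f = Out i))
                    \<and> c \<in> {Set0, Set1}}"

(* Plain a = a, PTest a = +a, NTest a = -a, Jump l = #l, Term = ! *)
datatype prim = Plain basic | PTest basic | NTest basic | Jump nat | Term

fun prim_ok :: "nat \<Rightarrow> nat \<Rightarrow> prim \<Rightarrow> bool" where
  "prim_ok n m (Plain a) = (a \<in> BI n m)"
| "prim_ok n m (PTest a) = (a \<in> BI n m)"
| "prim_ok n m (NTest a) = (a \<in> BI n m)"
| "prim_ok n m (Jump l) = True"
| "prim_ok n m Term = True"

definition IS :: "nat \<Rightarrow> nat \<Rightarrow> prim list set" where
  "IS n m = {X. X \<noteq> [] \<and> (\<forall>u \<in> set X. prim_ok n m u)}"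

(* basic actions: f.m and trace actions <f.m>r *)
datatype action = BAct basic | TAct basic bool

(* Post x a y  is  x \<unlhd> a \<unrhd> y *)
datatype thread = S | D | Post thread action thread

definition pre :: "action \<Rightarrow> thread \<Rightarrow> thread" where
  "pre a x = Post x a x"

fun hd_weight :: "prim list \<Rightarrow> nat" where
  "hd_weight (PTest a # X) = 1"
| "hd_weight (NTest a # X) = 1"
| "hd_weight _ = 0"

(* thread extraction |X| ; the value on [] is irrelevant (IS is nonempty) *)
lemma hd_weight_le: "hd_weight X \<le> 1"
  by (cases X rule: hd_weight.cases) auto

function (sequential) extr :: "prim list \<Rightarrow> thread" where
  "extr [] = D"
| "extr [Plain a] = pre (BAct a) D"
| "extr (Plain a # X) = pre (BAct a) (extr X)"
| "extr [PTest a] = pre (BAct a) D"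
| "extr (PTest a # X) = Post (extr X) (BAct a) (extr (Jump 2 # X))"
| "extr [NTest a] = pre (BAct a) D"
| "extr (NTest a # X) = Post (extr (Jump 2 # X)) (BAct a) (extr X)"
| "extr [Jump l] = D"
| "extr (Jump 0 # X) = D"
| "extr (Jump (Suc 0) # X) = extr X"
| "extr [Jump (Suc (Suc l)), u] = D"
| "extr (Jump (Suc (Suc l)) # u # X) = extr (Jump (Suc l) # X)"
| "extr [Term] = S"
| "extr (Term # X) = S"
  by pat_completeness auto
termination
  by (relation "measure (\<lambda>X. 2 * length X + hd_weight X)") (auto simp: less_Suc_eq_le intro: order.trans[OF hd_weight_le])

type_synonym regfam = "focus \<Rightarrow> bool option"

(* processing a method on a boolean register with content b: (reply, new content) *)
fun proc :: "meth \<Rightarrow> bool \<Rightarrow> bool \<times> bool" where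
  "proc Set0 b = (False, False)"
| "proc Set1 b = (True, True)"
| "proc Get b = (b, b)"

fun tuse :: "thread \<Rightarrow> regfam \<Rightarrow> thread" where
  "tuse S F = S"
| "tuse D F = D"
| "tuse (Post x (BAct (f, mt)) y) F =
     (case F f of
        None \<Rightarrow> Post (tuse x F) (BAct (f, mt)) (tuse y F)
      | Some b \<Rightarrow>
          (let (r, b') = proc mt b; F' = F(f := Some b') in
             if r then pre (TAct (f, mt) True) (tuse x F')
             else pre (TAct (f, mt) False) (tuse y F')))"
| "tuse (Post x (TAct a r) y) F = pre (TAct a r) (tuse x F)"

definition in_fam :: "nat \<Rightarrow> (nat \<Rightarrow> bool) \<Rightarrow> regfam" where
  "in_fam n bs = (\<lambda>f. case f of In i \<Rightarrow> (if 1 \<le> i \<and> i \<le> n then Some (bs i) else None)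
                               | _ \<Rightarrow> None)"

definition eq_b :: "nat \<Rightarrow> nat \<Rightarrow> prim list \<Rightarrow> prim list \<Rightarrow> bool" where
  "eq_b n m X Y \<longleftrightarrow> X \<in> IS n m \<and> Y \<in> IS n m \<and> extr X = extr Y"

fun chi_m :: "meth \<Rightarrow> meth" where
  "chi_m Set0 = Set1"
| "chi_m Set1 = Set0"
| "chi_m Get = Get"

definition flip_focus :: "nat set \<Rightarrow> focus \<Rightarrow> bool" where
  "flip_focus I f \<longleftrightarrow> (\<exists>i \<in> I. f = Aux i)"

fun chi :: "nat set \<Rightarrow> prim \<Rightarrow> prim" where
  "chi I (Plain (f, mt)) = (if flip_focus I f then Plain (f, chi_m mt) else Plain (f, mt))"
| "chi I (PTest (f, mt)) = (if flip_focus I f then NTest (f, chi_m mt) else PTest (f, mt))"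
| "chi I (NTest (f, mt)) = (if flip_focus I f then PTest (f, chi_m mt) else NTest (f, mt))"
| "chi I (Jump l) = Jump l"
| "chi I Term = Term"

definition eq_x :: "nat \<Rightarrow> nat \<Rightarrow> prim list \<Rightarrow> prim list \<Rightarrow> bool" where
  "eq_x n m X Y \<longleftrightarrow> X \<in> IS n m \<and> Y \<in> IS n m \<and>
     (\<exists>I. finite I \<and> I \<subseteq> {0<..} \<and> Y = map (chi I) X)"

fun rho_f :: "(nat \<Rightarrow> nat) \<Rightarrow> focus \<Rightarrow> focus" where
  "rho_f r (Aux i) = Aux (r i)"
| "rho_f r f = f"

fun rho :: "(nat \<Rightarrow> nat) \<Rightarrow> prim \<Rightarrow> prim" where
  "rho r (Plain (f, mt)) = Plain (rho_f r f, mt)"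
| "rho r (PTest (f, mt)) = PTest (rho_f r f, mt)"
| "rho r (NTest (f, mt)) = NTest (rho_f r f, mt)"
| "rho r (Jump l) = Jump l"
| "rho r Term = Term"

definition eq_r :: "nat \<Rightarrow> nat \<Rightarrow> prim list \<Rightarrow> prim list \<Rightarrow> bool" where
  "eq_r n m X Y \<longleftrightarrow> X \<in> IS n m \<and> Y \<in> IS n m \<and>
     (\<exists>r. bij_betw r {0<..} {0<..} \<and> Y = map (rho r) X)"

fun thread_over :: "nat \<Rightarrow> nat \<Rightarrow> thread \<Rightarrow> bool" where
  "thread_over n m S = True"
| "thread_over n m D = True"
| "thread_over n m (Post x (BAct a) y) = (a \<in> BI n m \<and> thread_over n m x \<and> thread_over n m y)"
| "thread_over n m (Post x (TAct a r) y) = False"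

inductive teq' :: "nat \<Rightarrow> nat \<Rightarrow> thread \<Rightarrow> thread \<Rightarrow> bool" for n m where
  swap: "\<lbrakk> a \<in> BI n m; b \<in> BI n m; focus_of a \<noteq> focus_of b;
           thread_over n m x; thread_over n m y; thread_over n m x'; thread_over n m y' \<rbrakk>
         \<Longrightarrow> teq' n m (Post (Post x (BAct b) y) (BAct a) (Post x' (BAct b) y'))
                      (Post (Post x (BAct a) x') (BAct b) (Post y (BAct a) y'))"
| refl: "thread_over n m x \<Longrightarrow> teq' n m x x"
| trans: "\<lbrakk> teq' n m x y; teq' n m y z \<rbrakk> \<Longrightarrow> teq' n m x z"
| cong: "\<lbrakk> a \<in> BI n m; teq' n m x x'; teq' n m y y' \<rbrakk>
         \<Longrightarrow> teq' n m (Post x (BAct a) y) (Post x' (BAct a) y')"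

definition eq_t :: "nat \<Rightarrow> nat \<Rightarrow> prim list \<Rightarrow> prim list \<Rightarrow> bool" where
  "eq_t n m X Y \<longleftrightarrow> X \<in> IS n m \<and> Y \<in> IS n m \<and> teq' n m (extr X) (extr Y)"

definition eq_ct :: "nat \<Rightarrow> nat \<Rightarrow> prim list \<Rightarrow> prim list \<Rightarrow> bool" where
  "eq_ct n m X Y \<longleftrightarrow> X \<in> IS n m \<and> Y \<in> IS n m \<and>
     (\<forall>bs. tuse (extr X) (in_fam n bs) = tuse (extr Y) (in_fam n bs))"

(* structural algorithmic / computational equivalence: transitive closures of the unions *)
definition eq_sa :: "nat \<Rightarrow> nat \<Rightarrow> prim list \<Rightarrow> prim list \<Rightarrow> bool" where
  "eq_sa n m = (\<lambda>X Y. eq_b n m X Y \<or> eq_x n m X Y \<or> eq_r n m X Y \<or> eq_t n m X Y)\<^sup>+\<^sup>+"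

definition eq_sc :: "nat \<Rightarrow> nat \<Rightarrow> prim list \<Rightarrow> prim list \<Rightarrow> bool" where
  "eq_sc n m = (\<lambda>X Y. eq_ct n m X Y \<or> eq_x n m X Y \<or> eq_r n m X Y \<or> eq_t n m X Y)\<^sup>+\<^sup>+"

end

theory Submission
  imports Defs
begin

text \<open>The number of \<open>S\<close>-leaves of the extracted thread is invariant under all four generators
  of \<open>\<approx>\<^sub>s\<^sub>a\<close>: instruction-wise renamings and register flips leave the branching skeleton
  of the thread intact (a flip only exchanges the two branches of a test), and the swap rule of
  \<open>\<approx>'\<^sub>t\<close> merely permutes leaves. Computational trace equivalence does not preserve it:
  \<open>+in\<^sub>1.get;+in\<^sub>1.get;!;!\<close> and \<open>+in\<^sub>1.get;+in\<^sub>1.get;!\<close> extract to threads with three and two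
  \<open>S\<close>-leaves, but the second test repeats the reply of the first, so the unreachable
  leaves never show up in any trace.\<close>

fun S_leaves :: "thread \<Rightarrow> nat" where
  "S_leaves S = 1"
| "S_leaves D = 0"
| "S_leaves (Post x a y) = S_leaves x + S_leaves y"

lemma S_leaves_pre [simp]: "S_leaves (pre a x) = 2 * S_leaves x"
  by (simp add: pre_def)

lemma S_leaves_teq': "teq' n m x y \<Longrightarrow> S_leaves x = S_leaves y"
  by (induction rule: teq'.induct) auto

fun prim_shape :: "prim \<Rightarrow> prim" where
  "prim_shape (Plain a) = Plain (In 0, Get)"
| "prim_shape (PTest a) = PTest (In 0, Get)"
| "prim_shape (NTest a) = PTest (In 0, Get)"
| "prim_shape (Jump l) = Jump l"
| "prim_shape Term = Term"

lemma S_leaves_extr_map_prim_shape: "S_leaves (extr (map prim_shape X)) = S_leaves (extr X)"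
  by (induction X rule: extr.induct) auto

lemma S_leaves_extr_eq_if_shape_eq:
  "map prim_shape X = map prim_shape Y \<Longrightarrow> S_leaves (extr X) = S_leaves (extr Y)"
  by (metis S_leaves_extr_map_prim_shape)

lemma prim_shape_chi [simp]: "prim_shape (chi I u) = prim_shape u"
  by (cases "(I, u)" rule: chi.cases) auto

lemma prim_shape_rho [simp]: "prim_shape (rho r u) = prim_shape u"
  by (cases "(r, u)" rule: rho.cases) auto

lemma S_leaves_extr_chi: "S_leaves (extr (map (chi I) X)) = S_leaves (extr X)"
  by (rule S_leaves_extr_eq_if_shape_eq) simp

lemma S_leaves_extr_rho: "S_leaves (extr (map (rho r) X)) = S_leaves (extr X)"
  by (rule S_leaves_extr_eq_if_shape_eq) simp

lemma tranclp_invariant: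
  assumes "R\<^sup>+\<^sup>+ x y" and "\<And>u v. R u v \<Longrightarrow> f u = f v"
  shows "f x = f y"
  using assms by (induction rule: tranclp_induct) auto

lemma tranclp_mono_pred:
  assumes "R\<^sup>+\<^sup>+ x y" and "\<And>u v. R u v \<Longrightarrow> Q u v"
  shows "Q\<^sup>+\<^sup>+ x y"
  using assms by (induction rule: tranclp_induct) (auto intro: tranclp.trancl_into_trancl)

lemma S_leaves_extr_eq_sa: "eq_sa n m X Y \<Longrightarrow> S_leaves (extr X) = S_leaves (extr Y)"
  unfolding eq_sa_def
  by (erule tranclp_invariant)
    (auto simp: eq_b_def eq_x_def eq_r_def eq_t_def S_leaves_extr_chi S_leaves_extr_rho
      dest: S_leaves_teq')

lemma eq_b_imp_eq_ct: "eq_b n m X Y \<Longrightarrow> eq_ct n m X Y"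
  by (simp add: eq_b_def eq_ct_def)

lemma eq_sa_imp_eq_sc: "eq_sa n m X Y \<Longrightarrow> eq_sc n m X Y"
  unfolding eq_sa_def eq_sc_def
  by (erule tranclp_mono_pred) (auto dest: eq_b_imp_eq_ct)

theorem theorem2:
  fixes n m :: nat
  assumes "1 \<le> n"
  shows "(\<forall>X Y. eq_sa n m X Y \<longrightarrow> eq_sc n m X Y) \<and> (\<exists>X Y. eq_sc n m X Y \<and> \<not> eq_sa n m X Y)"
proof -
  let ?a = "(In 1, Get)"
  let ?X = "[PTest ?a, PTest ?a, Term, Term]"
  let ?Y = "[PTest ?a, PTest ?a, Term]"
  have "?a \<in> BI n m"
    using assms by (auto simp: BI_def)
  then have "eq_ct n m ?X ?Y"
    using assms by (auto simp: eq_ct_def IS_def in_fam_def pre_def numeral_2_eq_2 Let_def)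
  then have "eq_sc n m ?X ?Y"
    unfolding eq_sc_def by auto
  moreover have "S_leaves (extr ?X) \<noteq> S_leaves (extr ?Y)"
    by (simp add: numeral_2_eq_2)
  then have "\<not> eq_sa n m ?X ?Y"
    using S_leaves_extr_eq_sa by blast
  ultimately show ?thesis
    using eq_sa_imp_eq_sc by blast
qed

end
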